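(* Let $X$ be a proper geodesic metric space. For any $r\ge C>0$ and $M>0$ there exist $\hat r=\hat r(r,C,M)>0$ and $L_0=L_0(r,C,M)>0$ with the following property. Let $\alpha,\beta$ be geodesics with $d(\alpha^-,\beta^-)\le M$ and $d(\alpha^+,\beta^+)\le M$, and let $p$ be a $C$-contracting geodesic segment of length at least $L_0$. If $d(p^-,\alpha)\le r$ and $d(p^+,\alpha)\le r$, then $d(p^-,\beta)\le\hat r$ and $d(p^+,\beta)\le\hat r$.
   Context: $\gamma^-,\gamma^+$ denote the initial and terminal points of a path $\gamma$. $\pi_A$ is nearest-point projection; a closed $U$ is $C$-contracting if every geodesic $\gamma$ with $d(\gamma,U)\ge C$ satisfies $\mathrm{diam}(\pi_U(\gamma))\le C$. *)

theory Defs
  imports "HOL-Analysis.Analysis"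
begin

text \<open>A geodesic (segment) of length L \<ge> 0 is an isometric embedding of [0,L];
  its initial point is g 0, terminal point g L, and its image is g ` {0..L}.\<close>
definition geodesic :: "(real \<Rightarrow> 'a::metric_space) \<Rightarrow> real \<Rightarrow> bool" where
  "geodesic g L \<longleftrightarrow> L \<ge> 0 \<and> (\<forall>s\<in>{0..L}. \<forall>t\<in>{0..L}. dist (g s) (g t) = \<bar>s - t\<bar>)"

definition proper_space :: "'a::metric_space itself \<Rightarrow> bool" where
  "proper_space _ \<longleftrightarrow> (\<forall>(x::'a) r. compact (cball x r))"

definition geodesic_space :: "'a::metric_space itself \<Rightarrow> bool" where
  "geodesic_space _ \<longleftrightarrow> (\<forall>(x::'a) y. \<exists>g. geodesic g (dist x y) \<and> g 0 = x \<and> g (dist x y) = y)"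

definition proj :: "'a::metric_space set \<Rightarrow> 'a \<Rightarrow> 'a set" where
  "proj U x = {u \<in> U. dist x u = infdist x U}"

definition proj_set :: "'a::metric_space set \<Rightarrow> 'a set \<Rightarrow> 'a set" where
  "proj_set U A = (\<Union>x\<in>A. proj U x)"

definition contracting :: "real \<Rightarrow> 'a::metric_space set \<Rightarrow> bool" where
  "contracting C U \<longleftrightarrow> closed U \<and>
     (\<forall>g L. geodesic g L \<longrightarrow> setdist (g ` {0..L}) U \<ge> C \<longrightarrow>
        diameter (proj_set U (g ` {0..L})) \<le> C)"

end

theory Submission
  imports Defs
begin

text \<open>Let U be the image of p. The basic property of a C-contracting set is that a
  geodesic whose endpoints project more than C apart comes within 2C of both projections:
  until it first enters the closed C-neighbourhood of U its projection moves by at most C.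
  Consequently nearest-point projection to U almost preserves betweenness, up to an error
  of order C.

  Pick points x0 = \<alpha>(s0) and x1 = \<alpha>(s1) within r of p(0) and p(l); after reversing
  \<alpha> and \<beta> we may assume s0 \<le> s1. Then x0 lies between \<beta>(0) and x1 up to an error 2M,
  so the projection of \<beta>(0) lies near the projection of x0, hence near p(0); symmetrically
  the projection of \<beta>(b) lies near p(l). Since l is large, these two projections are more
  than C apart, so \<beta> passes within 2C of both of them, and thus near p(0) and p(l).\<close>

lemma geodesicD:
  "geodesic g L \<Longrightarrow> s \<in> {0..L} \<Longrightarrow> t \<in> {0..L} \<Longrightarrow> dist (g s) (g t) = \<bar>s - t\<bar>"
  unfolding geodesic_def by blast

lemma geodesic_nonneg: "geodesic g L \<Longrightarrow> 0 \<le> L"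
  unfolding geodesic_def by blast

lemma geodesic_continuous_on:
  assumes "geodesic g L"
  shows "continuous_on {0..L} g"
  unfolding continuous_on_iff
proof (intro ballI allI impI)
  fix x e assume x: "x \<in> {0..L}" and e: "(0::real) < e"
  show "\<exists>d>0. \<forall>x'\<in>{0..L}. dist x' x < d \<longrightarrow> dist (g x') (g x) < e"
    using e geodesicD[OF assms _ x] by (auto simp: dist_real_def intro!: exI[of _ e])
qed

lemma geodesic_image_compact: "geodesic g L \<Longrightarrow> compact (g ` {0..L})"
  by (intro compact_continuous_image geodesic_continuous_on) auto

lemma geodesic_restrict: "geodesic g L \<Longrightarrow> 0 \<le> T \<Longrightarrow> T \<le> L \<Longrightarrow> geodesic g T"
  unfolding geodesic_def by auto

lemma geodesic_reverse: "geodesic g L \<Longrightarrow> geodesic (\<lambda>t. g (L - t)) L"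
  unfolding geodesic_def by auto

lemma image_reverse_interval: "(\<lambda>t. g (L - t)) ` {0..L} = g ` {0..(L::real)}"
  by (force simp: image_iff intro: bexI[where x = "L - _"])

lemma infdist_compact_attained:
  fixes U :: "'a::metric_space set"
  assumes "compact U" "U \<noteq> {}"
  obtains z where "z \<in> U" "dist x z = infdist x U"
proof -
  have "continuous_on U (dist x)"
    by (intro continuous_intros)
  from continuous_attains_inf[OF assms this]
  obtain z where z: "z \<in> U" "\<forall>y\<in>U. dist x z \<le> dist x y"
    by blast
  have "dist x z \<le> infdist x U"
    using z assms by (auto simp: infdist_notempty intro!: cINF_greatest)
  with infdist_le[OF z(1), of x] z(1) that show ?thesis
    by force
qed

lemma infdist_geodesic_image_leE:
  assumes "geodesic \<alpha> a" "infdist x (\<alpha> ` {0..a}) \<le> r"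
  obtains s where "s \<in> {0..a}" "dist x (\<alpha> s) \<le> r"
proof -
  have "\<alpha> ` {0..a} \<noteq> {}"
    using geodesic_nonneg[OF assms(1)] by auto
  with geodesic_image_compact[OF assms(1)]
  obtain z where "z \<in> \<alpha> ` {0..a}" "dist x z = infdist x (\<alpha> ` {0..a})"
    by (rule infdist_compact_attained)
  with assms(2) that show ?thesis
    by auto
qed

lemma projD: "z \<in> proj U x \<Longrightarrow> z \<in> U \<and> dist x z = infdist x U"
  unfolding proj_def by blast

lemma proj_nonempty: "compact U \<Longrightarrow> U \<noteq> {} \<Longrightarrow> proj U x \<noteq> {}"
  using infdist_compact_attained[of U x] unfolding proj_def by blast

lemma proj_dist_le_twice:
  assumes "u \<in> U" "z \<in> proj U x"
  shows "dist u z \<le> 2 * dist x u"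
proof -
  have "dist x z \<le> dist x u"
    using projD[OF assms(2)] infdist_le[OF assms(1)] by simp
  then show ?thesis
    using dist_triangle[of u z x] by (simp add: dist_commute)
qed

lemma contractingD:
  "contracting C U \<Longrightarrow> geodesic g L \<Longrightarrow> C \<le> setdist (g ` {0..L}) U \<Longrightarrow>
    diameter (proj_set U (g ` {0..L})) \<le> C"
  unfolding contracting_def by blast

lemma contracting_nonneg:
  fixes U :: "'a::metric_space set"
  assumes "contracting C U"
  shows "0 \<le> C"
proof (rule ccontr)
  assume neg: "\<not> 0 \<le> C"
  define x :: 'a where "x = undefined"
  have "geodesic (\<lambda>_::real. x) 0"
    by (simp add: geodesic_def)
  moreover have "C \<le> setdist ((\<lambda>_::real. x) ` {0..0}) U"
    using neg setdist_pos_le[of "(\<lambda>_::real. x) ` {0..0}" U] by linarith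
  ultimately have "diameter (proj_set U ((\<lambda>_::real. x) ` {0..0})) \<le> C"
    by (rule contractingD[OF assms])
  moreover have "bounded (proj_set U ((\<lambda>_::real. x) ` {0..0}))"
    by (rule bounded_subset[OF bounded_cball[of x "infdist x U"]])
      (auto simp: proj_set_def proj_def)
  ultimately show False
    using diameter_ge_0 neg by force
qed

lemma contracting_proj_dist_le:
  assumes con: "contracting C U" and bd: "bounded U" and g: "geodesic \<gamma> L"
    and far: "\<forall>t\<in>{0..L}. C \<le> infdist (\<gamma> t) U"
    and st: "s \<in> {0..L}" "t \<in> {0..L}" and u: "u \<in> proj U (\<gamma> s)" and v: "v \<in> proj U (\<gamma> t)"
  shows "dist u v \<le> C"
proof -
  have "C \<le> dist x y" if "x \<in> \<gamma> ` {0..L}" "y \<in> U" for x y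
    using far that infdist_le[OF that(2), of x] by force
  then have "C \<le> setdist (\<gamma> ` {0..L}) U"
    unfolding le_setdist_iff using projD[OF u] st by auto
  then have "diameter (proj_set U (\<gamma> ` {0..L})) \<le> C"
    by (rule contractingD[OF con g])
  moreover have "bounded (proj_set U (\<gamma> ` {0..L}))"
    by (rule bounded_subset[OF bd]) (auto simp: proj_set_def proj_def)
  moreover have "u \<in> proj_set U (\<gamma> ` {0..L})" "v \<in> proj_set U (\<gamma> ` {0..L})"
    using u v st unfolding proj_set_def by auto
  ultimately show ?thesis
    using diameter_bounded_bound by fastforce
qed

lemma continuous_on_first_crossing:
  fixes f :: "real \<Rightarrow> real"
  assumes cont: "continuous_on {a..b} f" and start: "C < f a" and hit: "t \<in> {a..b}" "f t \<le> C"
  obtains s where "s \<in> {a..b}" "f s = C" "\<forall>u\<in>{a..s}. C \<le> f u"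
proof -
  define S where "S = {a..b} \<inter> f -` {..C}"
  have S: "S \<noteq> {}" "bdd_below S" "closed S"
    using hit cont by (auto simp: S_def intro!: continuous_closed_preimage bdd_belowI[of _ a])
  define s where "s = Inf S"
  have s: "s \<in> S"
    unfolding s_def using S by (rule closed_contains_Inf)
  have s_le: "s \<le> u" if "u \<in> S" for u
    unfolding s_def using that S(2) by (rule cInf_lower)
  have before: "C < f u" if "a \<le> u" "u < s" for u
  proof (rule ccontr)
    assume "\<not> C < f u"
    then have "u \<in> S"
      using that s by (auto simp: S_def)
    with s_le that show False
      by fastforce
  qed
  have "\<exists>u. a \<le> u \<and> u \<le> s \<and> f u = C"
    using s start cont by (intro IVT2') (auto simp: S_def elim: continuous_on_subset)
  then have "f s = C"
    using before by (metis less_le less_irrefl)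
  moreover have "C \<le> f u" if "u \<in> {a..s}" for u
    using before[of u] that \<open>f s = C\<close> by (cases "u = s") auto
  ultimately show ?thesis
    using that s by (auto simp: S_def)
qed

text \<open>Up to its first entry into the closed C-neighbourhood of U, the geodesic
  stays at distance at least C from U, so its projection has moved by at most C.\<close>
lemma contracting_geodesic_near_proj_start:
  fixes \<gamma> :: "real \<Rightarrow> 'a::metric_space"
  assumes con: "contracting C U" and cU: "compact U" and g: "geodesic \<gamma> L"
    and z: "z \<in> proj U (\<gamma> 0)" and near: "\<exists>t\<in>{0..L}. infdist (\<gamma> t) U \<le> C"
  shows "\<exists>t\<in>{0..L}. dist (\<gamma> t) z \<le> 2 * C"
proof (cases "infdist (\<gamma> 0) U \<le> C")
  case True
  then show ?thesis
    using projD[OF z] geodesic_nonneg[OF g] contracting_nonneg[OF con]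
    by (intro bexI[of _ 0]) auto
next
  case False
  have "continuous_on {0..L} (\<lambda>t. infdist (\<gamma> t) U)"
    by (intro continuous_on_infdist geodesic_continuous_on[OF g])
  with False near obtain s where s: "s \<in> {0..L}" "infdist (\<gamma> s) U = C"
    and far: "\<forall>u\<in>{0..s}. C \<le> infdist (\<gamma> u) U"
    by (auto elim!: continuous_on_first_crossing)
  obtain w where w: "w \<in> proj U (\<gamma> s)"
    using proj_nonempty[OF cU] projD[OF z] by blast
  have "dist z w \<le> C"
    using contracting_proj_dist_le[OF con compact_imp_bounded[OF cU]
        geodesic_restrict[OF g, of s] far _ _ z w] s by auto
  moreover have "dist (\<gamma> s) w = C"
    using projD[OF w] s by simp
  ultimately have "dist (\<gamma> s) z \<le> 2 * C"
    using dist_triangle[of "\<gamma> s" z w] by (simp add: dist_commute)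
  with s show ?thesis
    by auto
qed

lemma contracting_far_proj_geodesic_near_start:
  fixes \<gamma> :: "real \<Rightarrow> 'a::metric_space"
  assumes con: "contracting C U" and cU: "compact U" and g: "geodesic \<gamma> L"
    and zu: "zu \<in> proj U (\<gamma> 0)" and zv: "zv \<in> proj U (\<gamma> L)" and far: "dist zu zv > C"
  shows "\<exists>t\<in>{0..L}. dist (\<gamma> t) zu \<le> 2 * C"
proof (rule contracting_geodesic_near_proj_start[OF con cU g zu], rule ccontr)
  assume "\<not> (\<exists>t\<in>{0..L}. infdist (\<gamma> t) U \<le> C)"
  then have "dist zu zv \<le> C"
    using geodesic_nonneg[OF g]
    by (intro contracting_proj_dist_le[OF con compact_imp_bounded[OF cU] g _ _ _ zu zv]) auto
  with far show False
    by linarith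
qed

lemma contracting_far_proj_geodesic_near_end:
  fixes \<gamma> :: "real \<Rightarrow> 'a::metric_space"
  assumes con: "contracting C U" and cU: "compact U" and g: "geodesic \<gamma> L"
    and zu: "zu \<in> proj U (\<gamma> 0)" and zv: "zv \<in> proj U (\<gamma> L)" and far: "dist zu zv > C"
  shows "\<exists>t\<in>{0..L}. dist (\<gamma> t) zv \<le> 2 * C"
proof -
  have "\<exists>t\<in>{0..L}. dist (\<gamma> (L - t)) zv \<le> 2 * C"
    using contracting_far_proj_geodesic_near_start[OF con cU geodesic_reverse[OF g], of zv zu]
      zu zv far by (simp add: dist_commute)
  then obtain t where "t \<in> {0..L}" "dist (\<gamma> (L - t)) zv \<le> 2 * C"
    by blast
  then show ?thesis
    by (intro bexI[of _ "L - t"]) auto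
qed

lemma contracting_far_proj_dist_ge:
  fixes U :: "'a::metric_space set"
  assumes gs: "geodesic_space TYPE('a)" and con: "contracting C U" and cU: "compact U"
    and zx: "zx \<in> proj U x" and zy: "zy \<in> proj U y" and far: "dist zx zy > C"
  shows "infdist x U + dist zx zy + infdist y U - 8 * C \<le> dist x y"
proof -
  obtain \<gamma> where g: "geodesic \<gamma> (dist x y)" "\<gamma> 0 = x" "\<gamma> (dist x y) = y"
    using gs unfolding geodesic_space_def by blast
  let ?L = "dist x y"
  have zx': "zx \<in> proj U (\<gamma> 0)" and zy': "zy \<in> proj U (\<gamma> ?L)"
    using zx zy g by simp_all
  obtain t1 where t1: "t1 \<in> {0..?L}" "dist (\<gamma> t1) zx \<le> 2 * C"
    using contracting_far_proj_geodesic_near_start[OF con cU g(1) zx' zy' far] by blast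
  obtain t2 where t2: "t2 \<in> {0..?L}" "dist (\<gamma> t2) zy \<le> 2 * C"
    using contracting_far_proj_geodesic_near_end[OF con cU g(1) zx' zy' far] by blast
  have d: "dist x (\<gamma> t1) = t1" "dist x (\<gamma> t2) = t2"
     "dist y (\<gamma> t1) = ?L - t1" "dist y (\<gamma> t2) = ?L - t2"
     "dist (\<gamma> t1) (\<gamma> t2) = \<bar>t1 - t2\<bar>"
    using geodesicD[OF g(1), of 0 t1] geodesicD[OF g(1), of 0 t2] geodesicD[OF g(1), of ?L t1]
      geodesicD[OF g(1), of ?L t2] geodesicD[OF g(1), of t1 t2] t1 t2 g by auto
  have px: "dist x zx = infdist x U" "zx \<in> U" and py: "dist y zy = infdist y U" "zy \<in> U"
    using projD[OF zx] projD[OF zy] by auto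
  have "infdist x U \<le> t1 + 2 * C" "infdist x U \<le> t2 + 2 * C"
    using px py infdist_le[OF py(2), of x] dist_triangle[of x zx "\<gamma> t1"]
      dist_triangle[of x zy "\<gamma> t2"] d t1 t2 by (simp_all add: dist_commute)
  then have "infdist x U \<le> min t1 t2 + 2 * C"
    by (simp add: min_def)
  moreover have "infdist y U \<le> ?L - t1 + 2 * C" "infdist y U \<le> ?L - t2 + 2 * C"
    using px py infdist_le[OF px(2), of y] dist_triangle[of y zx "\<gamma> t1"]
      dist_triangle[of y zy "\<gamma> t2"] d t1 t2 by (simp_all add: dist_commute)
  then have "infdist y U \<le> ?L - max t1 t2 + 2 * C"
    by (simp add: max_def)
  moreover have "dist zx zy \<le> \<bar>t1 - t2\<bar> + 4 * C"
    using dist_triangle[of zx zy "\<gamma> t1"] dist_triangle[of "\<gamma> t1" zy "\<gamma> t2"] d t1 t2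
    by (simp add: dist_commute)
  moreover have "min t1 t2 + \<bar>t1 - t2\<bar> + (?L - max t1 t2) = ?L"
    by (simp add: min_def max_def abs_if)
  ultimately show ?thesis
    by linarith
qed

lemma contracting_proj_almost_between:
  fixes U :: "'a::metric_space set"
  assumes gs: "geodesic_space TYPE('a)" and con: "contracting C U" and cU: "compact U"
    and zy: "zy \<in> proj U y" and z0: "z0 \<in> proj U x0" and z1: "z1 \<in> proj U x1"
    and far: "C < dist zy z0"
  shows "dist zy z0 + dist z0 z1 \<le>
    dist zy z1 + (dist y x0 + dist x0 x1 - dist y x1) + 2 * infdist x1 U + 8 * C"
proof -
  have "infdist y U + dist zy z0 + infdist x0 U - 8 * C \<le> dist y x0"
    using contracting_far_proj_dist_ge[OF gs con cU zy z0 far] .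
  moreover have "dist z0 z1 \<le> dist z0 x0 + dist x0 x1 + dist x1 z1"
    using dist_triangle[of z0 z1 x0] dist_triangle[of x0 z1 x1] by linarith
  moreover have "dist y x1 \<le> dist y zy + dist zy z1 + dist z1 x1"
    using dist_triangle[of y x1 zy] dist_triangle[of zy x1 z1] by linarith
  ultimately show ?thesis
    using projD[OF zy] projD[OF z0] projD[OF z1] dist_commute[of z0 x0] dist_commute[of z1 x1]
    by linarith
qed

lemma geodesic_almost_between:
  assumes g: "geodesic \<alpha> a" and ijk: "i \<in> {0..a}" "j \<in> {0..a}" "k \<in> {0..a}"
    and between: "min i k \<le> j" "j \<le> max i k" and y: "dist y (\<alpha> i) \<le> M"
  shows "dist y (\<alpha> j) + dist (\<alpha> j) (\<alpha> k) \<le> dist y (\<alpha> k) + 2 * M"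
proof -
  have "dist (\<alpha> i) (\<alpha> j) = \<bar>i - j\<bar>" "dist (\<alpha> j) (\<alpha> k) = \<bar>j - k\<bar>"
    "dist (\<alpha> i) (\<alpha> k) = \<bar>i - k\<bar>"
    using geodesicD[OF g] ijk by auto
  then show ?thesis
    using dist_triangle[of y "\<alpha> j" "\<alpha> i"] dist_triangle[of "\<alpha> i" "\<alpha> k" y]
      dist_commute[of "\<alpha> i" y] y between by linarith
qed

lemma contracting_proj_near_start:
  fixes p :: "real \<Rightarrow> 'a::metric_space"
  assumes gs: "geodesic_space TYPE('a)" and p: "geodesic p l"
    and con: "contracting C (p ` {0..l})" and E: "0 \<le> E"
    and between: "dist y x0 + dist x0 x1 \<le> dist y x1 + E"
    and x0: "dist x0 (p 0) \<le> r" and x1: "dist x1 (p l) \<le> r"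
    and l: "5 * r + 4 * C + E < l" and zy: "zy \<in> proj (p ` {0..l}) y"
  shows "dist zy (p 0) \<le> 3 * r + 4 * C + E"
proof -
  let ?U = "p ` {0..l}"
  have cU: "compact ?U"
    using geodesic_image_compact[OF p] .
  have l0: "0 \<le> l"
    using geodesic_nonneg[OF p] .
  then have ends: "p 0 \<in> ?U" "p l \<in> ?U"
    by auto
  obtain z0 z1 where z0: "z0 \<in> proj ?U x0" and z1: "z1 \<in> proj ?U x1"
    using proj_nonempty[OF cU] ends by blast
  obtain \<sigma> t0 t1 where params: "\<sigma> \<in> {0..l}" "zy = p \<sigma>" "t0 \<in> {0..l}" "z0 = p t0"
      "t1 \<in> {0..l}" "z1 = p t1"
    using projD[OF zy] projD[OF z0] projD[OF z1] by blast
  have d: "dist (p s) (p t) = \<bar>s - t\<bar>" if "s \<in> {0..l}" "t \<in> {0..l}" for s t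
    using geodesicD[OF p that] .
  have t0: "t0 \<le> 2 * r"
    using proj_dist_le_twice[OF ends(1) z0] d[of 0 t0] params x0 l0 by (simp add: dist_commute)
  have t1: "l - t1 \<le> 2 * r"
    using proj_dist_le_twice[OF ends(2) z1] d[of l t1] params x1 l0 by (simp add: dist_commute)
  have dists: "dist zy (p 0) = \<sigma>" "dist zy z0 = \<bar>\<sigma> - t0\<bar>"
      "dist z0 z1 = \<bar>t0 - t1\<bar>" "dist zy z1 = \<bar>\<sigma> - t1\<bar>"
    using d params l0 by auto
  have C: "0 \<le> C" and r: "0 \<le> r"
    using contracting_nonneg[OF con] zero_le_dist[of x0 "p 0"] x0 by linarith+
  show ?thesis
  proof (cases "C < dist zy z0")
    case far: True
    \<comment> \<open>the projections p \<sigma>, p t0, p t1 of y, x0, x1 inherit the almost-betweenness;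
      as t0 is near 0 and t1 near l, this forces \<sigma> to be near t0\<close>
    have "\<bar>\<sigma> - t0\<bar> + \<bar>t0 - t1\<bar> \<le> \<bar>\<sigma> - t1\<bar> + 2 * r + 8 * C + E"
      using contracting_proj_almost_between[OF gs con cU zy z0 z1 far] between
        infdist_le2[OF ends(2) x1] dists by linarith
    then show ?thesis
      using t0 t1 dists l C r E params by linarith
  next
    case False
    then show ?thesis
      using t0 dists C r E by linarith
  qed
qed

lemma contracting_proj_near_end:
  fixes p :: "real \<Rightarrow> 'a::metric_space"
  assumes gs: "geodesic_space TYPE('a)" and p: "geodesic p l"
    and con: "contracting C (p ` {0..l})" and E: "0 \<le> E"
    and between: "dist y x1 + dist x1 x0 \<le> dist y x0 + E"
    and x0: "dist x0 (p 0) \<le> r" and x1: "dist x1 (p l) \<le> r"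
    and l: "5 * r + 4 * C + E < l" and zy: "zy \<in> proj (p ` {0..l}) y"
  shows "dist zy (p l) \<le> 3 * r + 4 * C + E"
proof -
  have "dist zy ((\<lambda>t. p (l - t)) 0) \<le> 3 * r + 4 * C + E"
    using x0 x1 con zy
    by (intro contracting_proj_near_start[OF gs geodesic_reverse[OF p] _ E between _ _ l])
      (simp_all add: image_reverse_interval)
  then show ?thesis
    by simp
qed

lemma contracting_segment_near_geodesic_ordered:
  fixes \<alpha> \<beta> p :: "real \<Rightarrow> 'a::metric_space"
  assumes gs: "geodesic_space TYPE('a)" and \<alpha>: "geodesic \<alpha> a" and \<beta>: "geodesic \<beta> b"
    and start: "dist (\<alpha> 0) (\<beta> 0) \<le> M" and finish: "dist (\<alpha> a) (\<beta> b) \<le> M"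
    and p: "geodesic p l" and con: "contracting C (p ` {0..l})"
    and l: "6 * r + 9 * C + 4 * M < l"
    and s: "s0 \<in> {0..a}" "s1 \<in> {0..a}" "s0 \<le> s1"
    and x0: "dist (p 0) (\<alpha> s0) \<le> r" and x1: "dist (p l) (\<alpha> s1) \<le> r"
  shows "infdist (p 0) (\<beta> ` {0..b}) \<le> 3 * r + 6 * C + 2 * M \<and>
    infdist (p l) (\<beta> ` {0..b}) \<le> 3 * r + 6 * C + 2 * M"
proof -
  let ?U = "p ` {0..l}"
  have cU: "compact ?U" and l0: "0 \<le> l" and a0: "0 \<le> a"
    using geodesic_image_compact[OF p] geodesic_nonneg[OF p] geodesic_nonneg[OF \<alpha>] .
  have C: "0 \<le> C" and r: "0 \<le> r" and M: "0 \<le> M"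
    using contracting_nonneg[OF con] zero_le_dist[of "p 0" "\<alpha> s0"] zero_le_dist[of "\<alpha> 0" "\<beta> 0"]
      x0 start by linarith+
  have "?U \<noteq> {}"
    using l0 by auto
  then obtain z z' where z: "z \<in> proj ?U (\<beta> 0)" and z': "z' \<in> proj ?U (\<beta> b)"
    using proj_nonempty[OF cU] by blast
  have x0': "dist (\<alpha> s0) (p 0) \<le> r" and x1': "dist (\<alpha> s1) (p l) \<le> r"
    using x0 x1 by (simp_all add: dist_commute)
  have "dist (\<beta> 0) (\<alpha> s0) + dist (\<alpha> s0) (\<alpha> s1) \<le> dist (\<beta> 0) (\<alpha> s1) + 2 * M"
    using start s a0 by (intro geodesic_almost_between[OF \<alpha>]) (auto simp: dist_commute)
  then have near0: "dist z (p 0) \<le> 3 * r + 4 * C + 2 * M"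
    using l C r M by (intro contracting_proj_near_start[OF gs p con _ _ x0' x1' _ z]) auto
  have "dist (\<beta> b) (\<alpha> s1) + dist (\<alpha> s1) (\<alpha> s0) \<le> dist (\<beta> b) (\<alpha> s0) + 2 * M"
    using finish s a0 by (intro geodesic_almost_between[OF \<alpha>]) (auto simp: dist_commute)
  then have near1: "dist z' (p l) \<le> 3 * r + 4 * C + 2 * M"
    using l C r M by (intro contracting_proj_near_end[OF gs p con _ _ x0' x1' _ z']) auto
  have "l \<le> dist (p 0) z + dist z z' + dist z' (p l)"
    using geodesicD[OF p, of 0 l] l0 dist_triangle[of "p 0" "p l" z] dist_triangle[of z "p l" z']
    by simp
  then have "C < dist z z'"
    using near0 near1 l by (simp add: dist_commute)
  with z z' obtain t t' where "t \<in> {0..b}" "dist (\<beta> t) z \<le> 2 * C"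
    and "t' \<in> {0..b}" "dist (\<beta> t') z' \<le> 2 * C"
    using contracting_far_proj_geodesic_near_start[OF con cU \<beta>]
      contracting_far_proj_geodesic_near_end[OF con cU \<beta>] by metis
  then show ?thesis
    using near0 near1 dist_triangle[of "p 0" "\<beta> t" z] dist_triangle[of "p l" "\<beta> t'" z']
      infdist_le[of "\<beta> t" "\<beta> ` {0..b}" "p 0"] infdist_le[of "\<beta> t'" "\<beta> ` {0..b}" "p l"]
    by (auto simp: dist_commute)
qed

lemma contracting_segment_near_geodesic:
  fixes \<alpha> \<beta> p :: "real \<Rightarrow> 'a::metric_space"
  assumes gs: "geodesic_space TYPE('a)" and \<alpha>: "geodesic \<alpha> a" and \<beta>: "geodesic \<beta> b"
    and start: "dist (\<alpha> 0) (\<beta> 0) \<le> M" and finish: "dist (\<alpha> a) (\<beta> b) \<le> M"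
    and p: "geodesic p l" and con: "contracting C (p ` {0..l})"
    and l: "6 * r + 9 * C + 4 * M < l"
    and x0: "infdist (p 0) (\<alpha> ` {0..a}) \<le> r" and x1: "infdist (p l) (\<alpha> ` {0..a}) \<le> r"
  shows "infdist (p 0) (\<beta> ` {0..b}) \<le> 3 * r + 6 * C + 2 * M \<and>
    infdist (p l) (\<beta> ` {0..b}) \<le> 3 * r + 6 * C + 2 * M"
proof -
  obtain s0 s1 where s: "s0 \<in> {0..a}" "s1 \<in> {0..a}"
    and x0': "dist (p 0) (\<alpha> s0) \<le> r" and x1': "dist (p l) (\<alpha> s1) \<le> r"
    using infdist_geodesic_image_leE[OF \<alpha> x0] infdist_geodesic_image_leE[OF \<alpha> x1] by metis
  show ?thesis
  proof (cases "s0 \<le> s1")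
    case True
    then show ?thesis
      using contracting_segment_near_geodesic_ordered[OF gs \<alpha> \<beta> start finish p con l s] x0' x1'
      by blast
  next
    case False
    have "infdist (p 0) ((\<lambda>t. \<beta> (b - t)) ` {0..b}) \<le> 3 * r + 6 * C + 2 * M \<and>
      infdist (p l) ((\<lambda>t. \<beta> (b - t)) ` {0..b}) \<le> 3 * r + 6 * C + 2 * M"
      using start finish s x0' x1' False geodesic_nonneg[OF \<alpha>]
      by (intro contracting_segment_near_geodesic_ordered[OF gs geodesic_reverse[OF \<alpha>]
          geodesic_reverse[OF \<beta>] _ _ p con l, of "a - s0" "a - s1"]) auto
    then show ?thesis
      by (simp add: image_reverse_interval)
  qed
qed

theorem lemma2p23:
  assumes "proper_space TYPE('a::metric_space)"
    and "geodesic_space TYPE('a)"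
    and "C > 0" and "r \<ge> C" and "M > 0"
  shows "\<exists>rh L0. rh > 0 \<and> L0 > 0 \<and>
    (\<forall>(\<alpha>::real \<Rightarrow> 'a) a \<beta> b p l.
       geodesic \<alpha> a \<longrightarrow> geodesic \<beta> b \<longrightarrow>
       dist (\<alpha> 0) (\<beta> 0) \<le> M \<longrightarrow> dist (\<alpha> a) (\<beta> b) \<le> M \<longrightarrow>
       geodesic p l \<longrightarrow> contracting C (p ` {0..l}) \<longrightarrow> l \<ge> L0 \<longrightarrow>
       infdist (p 0) (\<alpha> ` {0..a}) \<le> r \<longrightarrow> infdist (p l) (\<alpha> ` {0..a}) \<le> r \<longrightarrow>
       infdist (p 0) (\<beta> ` {0..b}) \<le> rh \<and> infdist (p l) (\<beta> ` {0..b}) \<le> rh)"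
proof -
  have bound: "infdist (p 0) (\<beta> ` {0..b}) \<le> 3 * r + 6 * C + 2 * M \<and>
      infdist (p l) (\<beta> ` {0..b}) \<le> 3 * r + 6 * C + 2 * M"
    if "geodesic \<alpha> a" "geodesic \<beta> b" "dist (\<alpha> 0) (\<beta> 0) \<le> M" "dist (\<alpha> a) (\<beta> b) \<le> M"
      "geodesic p l" "contracting C (p ` {0..l})" "6 * r + 9 * C + 4 * M + 1 \<le> l"
      "infdist (p 0) (\<alpha> ` {0..a}) \<le> r" "infdist (p l) (\<alpha> ` {0..a}) \<le> r"
    for \<alpha> \<beta> p :: "real \<Rightarrow> 'a" and a b l :: real
    by (rule contracting_segment_near_geodesic[OF assms(2) that(1-6) _ that(8,9)])
      (use that(7) in linarith)
  show ?thesis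
    by (rule exI[of _ "3 * r + 6 * C + 2 * M"], rule exI[of _ "6 * r + 9 * C + 4 * M + 1"])
      (use bound assms(3-5) in auto)
qed

end
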